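(* Let $k,l,m$ be positive integers. Suppose $A(x)=\sum_{i=0}^{k-1}a_ix^i$ is a monic polynomial of degree $k-1$, $B$ is a polynomial, and $c\in\mathbb C$, $c\ne0$, are such that $$(x-1)^l A(x)^m-x^kB(x)=c.$$ Then $A$ satisfies the differential equation $$m\,A'(x)\,(x-1)+l\,A(x)=\big(m(k-1)+l\big)\,x^{k-1};$$ consequently its coefficients are given by $a_{k-1}=1$ and $a_i=\dfrac{m(i+1)}{mi+l}\,a_{i+1}$ for $0\le i\le k-2$. Moreover $c=(-1)^l a_0^m$.
   Context: This is the normalization of the Shabat polynomial/Davenport–Zannier pair $P=(x-1)^lA^m$, $Q=x^kB$ for an ordinary tree of diameter 4 (series $F$). *)

theory Defs
  imports "HOL-Computational_Algebra.Polynomial"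
begin

end

theory Submission
  imports Defs
begin

text \<open>
  Write \<open>D = m A' (x - 1) + l A\<close>. Since \<open>P = (x - 1)^l A^m\<close> is congruent to the
  constant \<open>c\<close> modulo \<open>x^k\<close>, its derivative \<open>(x - 1)^(l-1) A^(m-1) D\<close> is divisible by
  \<open>x^(k-1)\<close>. Evaluating \<open>P\<close> at 0 gives \<open>c = (-1)^l A(0)^m \<noteq> 0\<close>, so the cofactor of \<open>D\<close>
  does not vanish at 0 and \<open>x^(k-1)\<close> divides \<open>D\<close>. As \<open>D\<close> has degree at most \<open>k - 1\<close> with
  leading coefficient \<open>m(k - 1) + l\<close>, it is that monomial, and comparing the lower
  coefficients of \<open>D\<close> with 0 yields the recursion.
\<close>

lemma coeff_shabat_operator:
  fixes A :: "'a::idom poly"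
  shows "coeff (smult (of_nat m) (pderiv A * [:-1, 1:]) + smult (of_nat l) A) i
     = of_nat (m * i + l) * coeff A i - of_nat (m * (i + 1)) * coeff A (i + 1)"
proof -
  have "pderiv A * [:-1, 1:] = pCons 0 (pderiv A) - pderiv A"
    by (simp add: mult.commute)
  then show ?thesis
    by (cases i) (simp_all add: coeff_pderiv algebra_simps)
qed

lemma pderiv_power_mult_power:
  fixes p q :: "'a::{comm_semiring_1,semiring_no_zero_divisors} poly"
  assumes "l > 0" and "m > 0"
  shows "pderiv (p ^ l * q ^ m) = p ^ (l - 1) * q ^ (m - 1)
           * (smult (of_nat m) (pderiv q * p) + smult (of_nat l) (pderiv p * q))"
proof -
  obtain l' m' where "l = Suc l'" and "m = Suc m'"
    using assms by (metis gr0_implies_Suc)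
  then show ?thesis
    unfolding pderiv_mult pderiv_power by (simp add: algebra_simps)
qed

lemma monom_1_dvd_pderiv:
  fixes p :: "'a::{comm_semiring_1,semiring_no_zero_divisors} poly"
  assumes "monom 1 k dvd p"
  shows "monom 1 (k - 1) dvd pderiv p"
  using assms by (simp add: monom_1_dvd_iff' coeff_pderiv)

lemma monom_1_dvd_mult_cancel:
  fixes p q :: "'a::idom poly"
  assumes "poly q 0 \<noteq> 0" and "monom 1 n dvd q * p"
  shows "monom 1 n dvd p"
proof (cases "p = 0")
  case False
  have "q \<noteq> 0" and "order 0 q = 0"
    using assms(1) order_root by auto
  with False have "order 0 (q * p) = order 0 p"
    by (simp add: order_mult)
  with assms(2) False \<open>q \<noteq> 0\<close> show ?thesis
    by (simp add: monom_1_dvd_iff)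
qed simp

lemma shabat_operator_eq_monom:
  fixes A :: "'a::idom poly"
  assumes "k > 0" and "degree A = k - 1" and "lead_coeff A = 1"
    and "monom 1 (k - 1) dvd smult (of_nat m) (pderiv A * [:-1, 1:]) + smult (of_nat l) A"
  shows "smult (of_nat m) (pderiv A * [:-1, 1:]) + smult (of_nat l) A
           = monom (of_nat (m * (k - 1) + l)) (k - 1)"
proof (rule poly_eqI)
  fix i
  consider "i < k - 1" | "i = k - 1" | "i > k - 1" by linarith
  then show "coeff (smult (of_nat m) (pderiv A * [:-1, 1:]) + smult (of_nat l) A) i
           = coeff (monom (of_nat (m * (k - 1) + l)) (k - 1)) i"
  proof cases
    case 1
    with assms(4) show ?thesis by (simp add: monom_1_dvd_iff')
  next
    case 2
    moreover have "coeff A k = 0"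
      using assms(1,2) by (simp add: coeff_eq_0)
    ultimately show ?thesis
      unfolding coeff_shabat_operator using assms(1,2,3) by simp
  next
    case 3
    with assms(2) show ?thesis unfolding coeff_shabat_operator by (simp add: coeff_eq_0)
  qed
qed

lemma shabat_coeff_recursion:
  fixes A :: "'a::field_char_0 poly"
  assumes "l > 0" and "i < n"
    and "monom 1 n dvd smult (of_nat m) (pderiv A * [:-1, 1:]) + smult (of_nat l) A"
  shows "coeff A i = (of_nat (m * (i + 1)) / of_nat (m * i + l)) * coeff A (i + 1)"
proof -
  have "of_nat (m * i + l) * coeff A i = of_nat (m * (i + 1)) * coeff A (i + 1)"
    using assms(2,3) coeff_shabat_operator[of m A l i] by (simp add: monom_1_dvd_iff')
  moreover have "(of_nat (m * i + l) :: 'a) \<noteq> 0"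
    using assms(1) by (simp only: of_nat_eq_0_iff)
  ultimately show ?thesis
    by (simp add: field_simps)
qed

theorem mainTheorem7:
  fixes k l m :: nat and A B :: "complex poly" and c :: complex
  assumes "k > 0" and "l > 0" and "m > 0"
    and "degree A = k - 1" and "lead_coeff A = 1"
    and "c \<noteq> 0"
    and "[:-1, 1:] ^ l * A ^ m - monom 1 k * B = [:c:]"
  shows "smult (of_nat m) (pderiv A * [:-1, 1:]) + smult (of_nat l) A
           = monom (of_nat (m * (k - 1) + l)) (k - 1)
    \<and> coeff A (k - 1) = 1
    \<and> (\<forall>i. i + 2 \<le> k \<longrightarrow>
           coeff A i = (of_nat (m * (i + 1)) / of_nat (m * i + l)) * coeff A (i + 1))
    \<and> c = (-1) ^ l * (coeff A 0) ^ m"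
proof -
  let ?D = "smult (of_nat m) (pderiv A * [:-1, 1:]) + smult (of_nat l) A"
  have P_eq: "[:-1, 1:] ^ l * A ^ m = monom 1 k * B + [:c:]"
    using assms(7) by (simp add: algebra_simps)
  have c_poly: "c = (-1) ^ l * (poly A 0) ^ m"
    using arg_cong[OF P_eq, of "\<lambda>p. poly p 0"] assms(1)
    by (simp add: poly_monom del: poly_0_coeff_0)
  then have c_eq: "c = (-1) ^ l * (coeff A 0) ^ m"
    by (simp add: poly_0_coeff_0)
  have "pderiv ([:-1, 1:] ^ l * A ^ m) = pderiv (monom 1 k * B)"
    unfolding P_eq by (simp add: pderiv_add pderiv_pCons)
  then have "monom 1 (k - 1) dvd pderiv ([:-1, 1:] ^ l * A ^ m)"
    using monom_1_dvd_pderiv[OF dvd_triv_left] by metis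
  then have "monom 1 (k - 1) dvd [:-1, 1:] ^ (l - 1) * A ^ (m - 1) * ?D"
    using assms(2,3) by (simp add: pderiv_power_mult_power pderiv_pCons)
  moreover have "poly ([:-1, 1:] ^ (l - 1) * A ^ (m - 1)) 0 \<noteq> 0"
    using c_poly assms(6) by (simp del: poly_0_coeff_0)
  ultimately have D_dvd: "monom 1 (k - 1) dvd ?D"
    by (rule monom_1_dvd_mult_cancel[rotated])
  have "\<forall>i. i + 2 \<le> k \<longrightarrow>
           coeff A i = (of_nat (m * (i + 1)) / of_nat (m * i + l)) * coeff A (i + 1)"
    using shabat_coeff_recursion[OF assms(2) _ D_dvd] by simp
  with shabat_operator_eq_monom[OF assms(1,4,5) D_dvd] assms(4,5) c_eq show ?thesis
    by simp
qed

end
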